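(* Let $m\ge 1$ and let $n_1,\dots,n_m$ be positive integers. Let $w_1,\dots,w_m>0$ be pairwise distinct weights and put $r_k=1/w_k$. Let $x_{k;j}$ ($1\le k\le m$, $1\le j\le n_k$) be independent random variables, each uniformly distributed on $(0,1]$, and define $$Q=\prod_{k=1}^m\Big[\prod_{j=1}^{n_k}x_{k;j}\Big]^{w_k}.$$ For $\tau\in(0,1]$ put $t=-\ln\tau$, and for $x\ge 0$ and an integer $n\ge 0$ let $H(x,n)=e^{-x}\sum_{i=0}^{n}\frac{x^i}{i!}$. Then $$\mathrm{Prob}(Q\le\tau)=\sum_{k=1}^m\sum_{g_k=0}^{n_k-1}\ \sum_{\substack{(g_i)_{i\ne k},\ g_i\ge 0\\ \sum_{i=1}^m g_i=n_k-1}}\left(\prod_{j=1,\,j\ne k}^m\frac{(n_j-1+g_j)!}{(n_j-1)!\,g_j!}\,\frac{(-r_k)^{g_j}\,r_j^{n_j}}{(r_j-r_k)^{n_j+g_j}}\right)H(r_k t,\,g_k),$$ where the inner sum runs over all tuples of nonnegative integers $(g_i)_{i\ne k}$ such that $g_k+\sum_{i\ne k}g_i=n_k-1$.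
   Context: This is the combined $P$-value when $L=\sum_k n_k$ independent $P$-values are split into $m$ groups, the $P$-values of group $k$ all receiving weight $w_k$; the observed statistic is $\tau=\prod_k[\prod_j p_{k;j}]^{w_k}$. *)

theory Defs
  imports "HOL-Probability.Probability"
begin

definition H :: "real \<Rightarrow> nat \<Rightarrow> real" where
  "H x n = exp (- x) * (\<Sum>i\<le>n. x ^ i / fact i)"

definition Qstat :: "nat \<Rightarrow> (nat \<Rightarrow> nat) \<Rightarrow> (nat \<Rightarrow> real) \<Rightarrow> (nat \<times> nat \<Rightarrow> real) \<Rightarrow> real" where
  "Qstat m n w x = (\<Prod>k\<in>{1..m}. (\<Prod>j\<in>{1..n k}. x (k, j)) powr w k)"

end

theory Submission
  imports Defs
begin

text \<open>
  With \<open>r\<^sub>k = 1/w\<^sub>k\<close>, each \<open>-w\<^sub>k ln x\<^sub>k\<^sub>,\<^sub>j\<close> is exponential with rate \<open>r\<^sub>k\<close>, so \<open>-ln Q\<close> is a sum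
  of independent Erlang variables and the theorem computes its tail \<open>P(-ln Q \<ge> t)\<close>.
  Let \<open>\<Phi>(c, t)\<close> be the right-hand side with an arbitrary shape vector \<open>c\<close> in place of \<open>n\<close>,
  and \<open>S(c)\<close> the corresponding partial sum. We show \<open>P(S(c) \<ge> t) = \<Phi>(c, t)\<close> by induction
  on the number of summands. Adding an exponential of rate \<open>r\<^sub>p\<close> to \<open>S(c)\<close> gives the tail
  \<open>e^(-r\<^sub>p t) + \<integral> P(S(c) \<ge> t + w\<^sub>p ln z) dz\<close> over \<open>z \<in> [e^(-r\<^sub>p t), 1]\<close>. A Pascal-type
  recurrence for the partial-fraction coefficients shows that the bumped vector \<open>c'\<close> satisfies
  \<open>\<Phi>'(c', t) + r\<^sub>p \<Phi>(c', t) = r\<^sub>p \<Phi>(c, t)\<close>, and integrating gives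
  \<open>P(S(c') \<ge> t) = \<Phi>(c', t) + (1 - \<Phi>(c', 0)) e^(-r\<^sub>p t)\<close>. The defect \<open>1 - \<Phi>(c', 0)\<close> vanishes:
  if two groups are present, bumping either of them yields this identity with two distinct
  rates; for a single group \<open>\<Phi>\<close> is an Erlang tail, which equals \<open>1\<close> at \<open>0\<close>.
\<close>

definition compositions :: "'a set \<Rightarrow> nat \<Rightarrow> ('a \<Rightarrow> nat) set" where
  "compositions A d = {g. (\<forall>i. i \<notin> A \<longrightarrow> g i = 0) \<and> (\<Sum>i\<in>A. g i) = d}"

definition composition_sum :: "'a set \<Rightarrow> nat \<Rightarrow> ('a \<Rightarrow> nat \<Rightarrow> 'b::comm_semiring_1) \<Rightarrow> 'b" where
  "composition_sum A d f = (\<Sum>g\<in>compositions A d. \<Prod>j\<in>A. f j (g j))"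

lemma finite_compositions: "finite A \<Longrightarrow> finite (compositions A d)"
proof -
  assume A: "finite A"
  have "compositions A d \<subseteq> {g. \<forall>x. (x \<in> A \<longrightarrow> g x \<in> {0..d}) \<and> (x \<notin> A \<longrightarrow> g x = 0)}"
    unfolding compositions_def using A by (auto simp: member_le_sum)
  then show ?thesis by (rule finite_subset) (intro finite_set_of_finite_funs A, simp)
qed

lemma compositions_0: "finite A \<Longrightarrow> compositions A 0 = {\<lambda>_. 0}"
  by (auto simp: compositions_def fun_eq_iff)

lemma composition_sum_cong:
  "(\<And>j i. j \<in> A \<Longrightarrow> f j i = f' j i) \<Longrightarrow> composition_sum A d f = composition_sum A d f'"
  unfolding composition_sum_def by (intro sum.cong prod.cong refl) auto

lemma sum_fun_upd_Diff: "(\<Sum>j\<in>A - {p}. (g(p := i)) j) = (\<Sum>j\<in>A - {p}. g j)"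
  by (rule sum.cong) auto

lemma bij_betw_compositions_remove:
  assumes A: "finite A" and p: "p \<in> A"
  shows "bij_betw (\<lambda>(i, g). g(p := i)) (SIGMA i:{..d}. compositions (A - {p}) (d - i))
           (compositions A d)"
proof (rule bij_betw_byWitness[where f' = "\<lambda>g. (g p, g(p := 0))"])
  have sum_A: "(\<Sum>j\<in>A. g j) = g p + (\<Sum>j\<in>A - {p}. g j)" for g :: "'a \<Rightarrow> nat"
    using A p by (rule sum.remove)
  have "g(p := i) \<in> compositions A d" if "g \<in> compositions (A - {p}) (d - i)" "i \<le> d" for i g
    using that p sum_A[of "g(p := i)"] unfolding compositions_def by (auto simp: sum_fun_upd_Diff)
  then show "(\<lambda>(i, g). g(p := i)) ` (SIGMA i:{..d}. compositions (A - {p}) (d - i)) \<subseteq> compositions A d"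
    by auto
  have "g p \<le> d \<and> g(p := 0) \<in> compositions (A - {p}) (d - g p)" if "g \<in> compositions A d" for g
    using that p sum_A[of g] unfolding compositions_def by (auto simp: sum_fun_upd_Diff)
  then show "(\<lambda>g. (g p, g(p := 0))) ` compositions A d \<subseteq> (SIGMA i:{..d}. compositions (A - {p}) (d - i))"
    by auto
qed (use p in \<open>auto simp: compositions_def fun_eq_iff\<close>)

lemma composition_sum_remove:
  assumes A: "finite A" and p: "p \<in> A"
  shows "composition_sum A d f = (\<Sum>i\<le>d. f p i * composition_sum (A - {p}) (d - i) f)"
proof -
  let ?S = "SIGMA i:{..d}. compositions (A - {p}) (d - i)"
  have prod_upd: "(\<Prod>j\<in>A. f j ((g(p := i)) j)) = f p i * (\<Prod>j\<in>A - {p}. f j (g j))" for g i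
  proof -
    have "(\<Prod>j\<in>A - {p}. f j ((g(p := i)) j)) = (\<Prod>j\<in>A - {p}. f j (g j))"
      by (rule prod.cong) auto
    then show ?thesis using A p by (simp add: prod.remove)
  qed
  have "composition_sum A d f = (\<Sum>x\<in>?S. \<Prod>j\<in>A. f j ((case x of (i, g) \<Rightarrow> g(p := i)) j))"
    unfolding composition_sum_def
    by (rule sum.reindex_bij_betw[OF bij_betw_compositions_remove[OF A p], symmetric])
  also have "\<dots> = (\<Sum>(i, g)\<in>?S. \<Prod>j\<in>A. f j ((g(p := i)) j))"
    by (rule sum.cong) auto
  also have "\<dots> = (\<Sum>i\<le>d. \<Sum>g\<in>compositions (A - {p}) (d - i). \<Prod>j\<in>A. f j ((g(p := i)) j))"
    by (rule sum.Sigma[symmetric]) (auto simp: A finite_compositions)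
  also have "\<dots> = (\<Sum>i\<le>d. f p i * composition_sum (A - {p}) (d - i) f)"
    by (simp only: prod_upd composition_sum_def sum_distrib_left)
  finally show ?thesis .
qed

lemma composition_sum_delta:
  assumes A: "finite A" and f: "\<And>j i. j \<in> A \<Longrightarrow> f j i = (if i = 0 then 1 else 0)"
  shows "composition_sum A d f = (if d = 0 then 1 else 0)"
proof (cases "d = 0")
  case True
  then show ?thesis using A f by (simp add: composition_sum_def compositions_0)
next
  case False
  have "(\<Prod>j\<in>A. f j (g j)) = 0" if "g \<in> compositions A d" for g
  proof -
    have "(\<Sum>j\<in>A. g j) \<noteq> 0" using that False by (simp add: compositions_def)
    then obtain j where "j \<in> A" "g j \<noteq> 0" by (meson sum.neutral)
    then show ?thesis using A f by (intro prod_zero) auto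
  qed
  then show ?thesis using False by (simp add: composition_sum_def)
qed

lemma composition_sum_fixed_coordinate:
  assumes A: "finite A" and k: "k \<in> A" and i: "i \<le> d"
  shows "(\<Sum>g\<in>{g \<in> compositions A d. g k = i}. \<Prod>j\<in>A - {k}. f j (g j))
         = composition_sum (A - {k}) (d - i) f"
proof -
  have "bij_betw (\<lambda>g. g(k := i)) (compositions (A - {k}) (d - i)) {g \<in> compositions A d. g k = i}"
  proof (rule bij_betw_byWitness[where f' = "\<lambda>g. g(k := 0)"])
    show "(\<lambda>g. g(k := i)) ` compositions (A - {k}) (d - i) \<subseteq> {g \<in> compositions A d. g k = i}"
      using i k by (auto simp: compositions_def sum.remove[OF A k] sum_fun_upd_Diff)
    show "(\<lambda>g. g(k := 0)) ` {g \<in> compositions A d. g k = i} \<subseteq> compositions (A - {k}) (d - i)"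
      by (auto simp: compositions_def sum.remove[OF A k])
  qed (use k in \<open>auto simp: compositions_def fun_eq_iff\<close>)
  then have "(\<Sum>g\<in>{g \<in> compositions A d. g k = i}. \<Prod>j\<in>A - {k}. f j (g j))
      = (\<Sum>g\<in>compositions (A - {k}) (d - i). \<Prod>j\<in>A - {k}. f j ((g(k := i)) j))"
    by (rule sum.reindex_bij_betw[symmetric])
  also have "\<dots> = composition_sum (A - {k}) (d - i) f"
    unfolding composition_sum_def by (intro sum.cong prod.cong) auto
  finally show ?thesis .
qed

text \<open>
  The \<open>g\<close>-th coefficient of \<open>(r\<^sub>j/(r\<^sub>j + s))^n\<^sub>j\<close> expanded in powers of \<open>(s + r\<^sub>k)/r\<^sub>k\<close>.
  For \<open>n\<^sub>j = 0\<close> the truncated subtraction makes it the Kronecker delta.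
\<close>
definition partial_fraction_coeff :: "real \<Rightarrow> real \<Rightarrow> nat \<Rightarrow> nat \<Rightarrow> real" where
  "partial_fraction_coeff rk rj nj g =
     real ((nj + g - 1) choose g) * ((- rk) ^ g * rj ^ nj / (rj - rk) ^ (nj + g))"

lemma partial_fraction_coeff_0: "partial_fraction_coeff rk rj 0 g = (if g = 0 then 1 else 0)"
  by (cases g) (simp_all add: partial_fraction_coeff_def)

lemma partial_fraction_coeff_fact:
  assumes "nj \<ge> 1"
  shows "partial_fraction_coeff rk rj nj g =
    fact (nj - 1 + g) / (fact (nj - 1) * fact g) * ((- rk) ^ g * rj ^ nj / (rj - rk) ^ (nj + g))"
proof -
  have "nj + g - 1 = nj - 1 + g" using assms by simp
  moreover have "real ((nj - 1 + g) choose g) = fact (nj - 1 + g) / (fact g * fact (nj - 1))"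
    by (subst binomial_fact) simp_all
  ultimately show ?thesis unfolding partial_fraction_coeff_def by (simp add: mult.commute)
qed

lemma partial_fraction_coeff_Suc:
  assumes "rp \<noteq> rk"
  shows "(rp - rk) * partial_fraction_coeff rk rp (Suc n) i
         + (if i = 0 then 0 else rk * partial_fraction_coeff rk rp (Suc n) (i - 1))
         = rp * partial_fraction_coeff rk rp n i"
proof (cases i)
  case 0
  then show ?thesis using assms by (simp add: partial_fraction_coeff_def field_simps)
next
  case (Suc b)
  define T where "T = (- rk) ^ i * rp ^ Suc n / (rp - rk) ^ (n + i)"
  have pascal: "real ((n + i) choose i) = real ((n + i - 1) choose i) + real ((n + i - 1) choose b)"
    using Suc by (simp add: add.commute)
  have "(rp - rk) * partial_fraction_coeff rk rp (Suc n) i = real ((n + i) choose i) * T"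
    using assms unfolding partial_fraction_coeff_def T_def by (simp add: field_simps)
  moreover have "rk * partial_fraction_coeff rk rp (Suc n) b = - (real ((n + i - 1) choose b) * T)"
  proof -
    have "rk * (- rk) ^ b = - ((- rk) ^ i)" using Suc by simp
    then show ?thesis using Suc unfolding partial_fraction_coeff_def T_def
      by (simp add: field_simps)
  qed
  moreover have "rp * partial_fraction_coeff rk rp n i = real ((n + i - 1) choose i) * T"
    unfolding partial_fraction_coeff_def T_def by (simp add: field_simps)
  ultimately show ?thesis using Suc by (simp add: pascal algebra_simps)
qed

definition poisson_term :: "real \<Rightarrow> nat \<Rightarrow> real" where
  "poisson_term y g = exp (- y) * y ^ g / fact g"

lemma H_0: "H y 0 = exp (- y)"
  by (simp add: H_def)

lemma H_Suc: "H y (Suc g) = H y g + poisson_term y (Suc g)"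
  by (simp add: H_def poisson_term_def algebra_simps)

lemma H_at_zero: "H 0 g = 1"
  by (induction g) (simp_all add: H_Suc H_0 poisson_term_def)

lemma H_minus_poisson_term: "H y g - poisson_term y g = (if g = 0 then 0 else H y (g - 1))"
  by (cases g) (simp_all add: H_0 poisson_term_def H_Suc)

lemma poisson_term_Suc_has_real_derivative:
  "((\<lambda>y. poisson_term y (Suc g)) has_real_derivative (poisson_term y g - poisson_term y (Suc g))) (at y)"
proof -
  have "((\<lambda>y. exp (- y) * y ^ Suc g * (1 / fact (Suc g))) has_real_derivative
     (exp (- y) * - 1 * y ^ Suc g + real (Suc g) * (1 * y ^ (Suc g - Suc 0)) * exp (- y))
       * (1 / fact (Suc g))) (at y)"
    by (rule derivative_eq_intros refl | simp)+
  moreover have "real (Suc g) * y ^ g * exp (- y) * (1 / fact (Suc g)) = exp (- y) * y ^ g / fact g"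
    by (simp add: fact_Suc)
  ultimately show ?thesis unfolding poisson_term_def by (simp add: algebra_simps)
qed

lemma H_has_real_derivative: "((\<lambda>y. H y g) has_real_derivative (- poisson_term y g)) (at y)"
proof (induction g)
  case 0
  show ?case unfolding H_0 poisson_term_def by (auto intro!: derivative_eq_intros)
next
  case (Suc g)
  have "((\<lambda>y. H y g + poisson_term y (Suc g)) has_real_derivative
          (- poisson_term y g + (poisson_term y g - poisson_term y (Suc g)))) (at y)"
    by (intro DERIV_add Suc poisson_term_Suc_has_real_derivative)
  then show ?case by (simp add: H_Suc)
qed

lemma H_scaled_has_real_derivative:
  "((\<lambda>x. H (a * x) g) has_real_derivative (- a * poisson_term (a * x) g)) (at x)"
proof -
  have "((\<lambda>x. H (a * x) g) has_real_derivative (- poisson_term (a * x) g) * a) (at x)"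
    by (rule DERIV_chain2[OF H_has_real_derivative]) (auto intro!: derivative_eq_intros)
  then show ?thesis by (simp add: algebra_simps)
qed

definition tail_coeff :: "nat \<Rightarrow> (nat \<Rightarrow> real) \<Rightarrow> (nat \<Rightarrow> nat) \<Rightarrow> nat \<Rightarrow> nat \<Rightarrow> real" where
  "tail_coeff m r c k g =
     composition_sum ({1..m} - {k}) (c k - 1 - g) (\<lambda>j. partial_fraction_coeff (r k) (r j) (c j))"

definition erlang_mix_tail :: "nat \<Rightarrow> (nat \<Rightarrow> real) \<Rightarrow> (nat \<Rightarrow> nat) \<Rightarrow> real \<Rightarrow> real" where
  "erlang_mix_tail m r c x = (\<Sum>k\<in>{1..m}. \<Sum>g<c k. tail_coeff m r c k g * H (r k * x) g)"

definition erlang_mix_tail_deriv :: "nat \<Rightarrow> (nat \<Rightarrow> real) \<Rightarrow> (nat \<Rightarrow> nat) \<Rightarrow> real \<Rightarrow> real" where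
  "erlang_mix_tail_deriv m r c x =
     (\<Sum>k\<in>{1..m}. \<Sum>g<c k. tail_coeff m r c k g * (- r k * poisson_term (r k * x) g))"

lemma erlang_mix_tail_has_real_derivative:
  "(erlang_mix_tail m r c has_real_derivative erlang_mix_tail_deriv m r c x) (at x)"
  unfolding erlang_mix_tail_def[abs_def] erlang_mix_tail_deriv_def
  by (intro DERIV_sum DERIV_cmult H_scaled_has_real_derivative)

lemma tail_coeff_bump_self:
  assumes "g < c p"
  shows "tail_coeff m r (c(p := Suc (c p))) p (Suc g) = tail_coeff m r c p g"
proof -
  have degree: "Suc (c p) - 1 - Suc g = c p - 1 - g" using assms by simp
  show ?thesis unfolding tail_coeff_def fun_upd_same degree by (rule composition_sum_cong) simp
qed

lemma tail_coeff_bump_other: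
  assumes p: "p \<in> {1..m}" and kp: "k \<noteq> p" and rr: "r p \<noteq> r k" and g: "g < c k"
  shows "(r p - r k) * tail_coeff m r (c(p := Suc (c p))) k g
     + (if Suc g < c k then r k * tail_coeff m r (c(p := Suc (c p))) k (Suc g) else 0)
     = r p * tail_coeff m r c k g"
proof -
  let ?c' = "c(p := Suc (c p))"
  define A where "A = {1..m} - {k}"
  have A: "finite A" "p \<in> A" using p kp by (auto simp: A_def)
  define f where "f = (\<lambda>j. partial_fraction_coeff (r k) (r j) (c j))"
  define f' where "f' = (\<lambda>j. partial_fraction_coeff (r k) (r j) (?c' j))"
  define T where "T i = composition_sum (A - {p}) i f" for i
  have T': "composition_sum (A - {p}) i f' = T i" for i
    unfolding T_def f_def f'_def by (rule composition_sum_cong) auto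
  define d where "d = c k - 1 - g"
  have C': "tail_coeff m r ?c' k g' = (\<Sum>i\<le>c k - 1 - g'. f' p i * T (c k - 1 - g' - i))" for g'
    unfolding tail_coeff_def f'_def[symmetric] A_def[symmetric]
    using kp by (simp add: composition_sum_remove[OF A] T')
  have C: "tail_coeff m r c k g = (\<Sum>i\<le>d. f p i * T (d - i))"
    unfolding tail_coeff_def f_def[symmetric] A_def[symmetric] d_def
    by (simp add: composition_sum_remove[OF A] T_def)
  have shifted: "(if Suc g < c k then r k * tail_coeff m r ?c' k (Suc g) else 0)
      = (\<Sum>i\<le>d. (if i = 0 then 0 else r k * f' p (i - 1)) * T (d - i))"
  proof (cases d)
    case 0
    then show ?thesis using g by (simp add: d_def)
  next
    case (Suc d')
    then have "Suc g < c k" "c k - 1 - Suc g = d'" using g by (simp_all add: d_def)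
    moreover have "(\<Sum>i\<le>d. (if i = 0 then 0 else r k * f' p (i - 1)) * T (d - i))
        = (\<Sum>i\<le>d'. r k * f' p i * T (d' - i))"
      unfolding Suc by (subst sum.atMost_Suc_shift) simp
    ultimately show ?thesis by (simp add: C' sum_distrib_left mult.assoc)
  qed
  have pascal: "(r p - r k) * f' p i + (if i = 0 then 0 else r k * f' p (i - 1)) = r p * f p i" for i
    unfolding f_def f'_def fun_upd_same by (rule partial_fraction_coeff_Suc[OF rr])
  have "(r p - r k) * tail_coeff m r ?c' k g
     + (if Suc g < c k then r k * tail_coeff m r ?c' k (Suc g) else 0)
     = (\<Sum>i\<le>d. ((r p - r k) * f' p i + (if i = 0 then 0 else r k * f' p (i - 1))) * T (d - i))"
    unfolding C'[of g, folded d_def] shifted by (simp add: sum_distrib_left sum.distrib[symmetric] algebra_simps)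
  also have "\<dots> = r p * tail_coeff m r c k g"
    unfolding C pascal by (simp add: sum_distrib_left mult.assoc)
  finally show ?thesis .
qed

lemma sum_lessThan_index_shift:
  fixes a b :: "nat \<Rightarrow> real"
  shows "(\<Sum>g<N. a g * (if g = 0 then 0 else b (g - 1)))
       = (\<Sum>g<N. (if Suc g < N then a (Suc g) else 0) * b g)"
proof (cases N)
  case (Suc N')
  have "(\<Sum>g<N. a g * (if g = 0 then 0 else b (g - 1))) = (\<Sum>g<N'. a (Suc g) * b g)"
    unfolding Suc by (subst sum.lessThan_Suc_shift) simp
  moreover have "(\<Sum>g<N. (if Suc g < N then a (Suc g) else 0) * b g) = (\<Sum>g<N'. a (Suc g) * b g)"
    unfolding Suc by (simp add: sum.lessThan_Suc)
  ultimately show ?thesis by simp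
qed simp

text \<open>For \<open>k = p\<close> the bumped coefficients are the old ones shifted by one index; for \<open>k \<noteq> p\<close>
  they obey the recurrence \<open>tail_coeff_bump_other\<close>.\<close>
lemma erlang_mix_tail_summand_ode:
  fixes c :: "nat \<Rightarrow> nat"
  assumes p: "p \<in> {1..m}" and rr: "k \<noteq> p \<Longrightarrow> r p \<noteq> r k"
  defines "c' \<equiv> c(p := Suc (c p))"
  shows "(\<Sum>g<c' k. tail_coeff m r c' k g * (- r k * poisson_term (r k * x) g))
           + r p * (\<Sum>g<c' k. tail_coeff m r c' k g * H (r k * x) g)
         = r p * (\<Sum>g<c k. tail_coeff m r c k g * H (r k * x) g)"
proof -
  let ?H = "\<lambda>g. H (r k * x) g"
  have split: "- r k * poisson_term (r k * x) g + r p * ?H g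
      = (r p - r k) * ?H g + r k * (if g = 0 then 0 else ?H (g - 1))" for g
    using H_minus_poisson_term[of "r k * x" g] by (simp add: algebra_simps)
  have "(\<Sum>g<c' k. tail_coeff m r c' k g * (- r k * poisson_term (r k * x) g))
          + r p * (\<Sum>g<c' k. tail_coeff m r c' k g * ?H g)
      = (\<Sum>g<c' k. tail_coeff m r c' k g * (- r k * poisson_term (r k * x) g + r p * ?H g))"
    by (simp add: sum_distrib_left sum.distrib[symmetric] algebra_simps)
  also have "\<dots> = (\<Sum>g<c' k. tail_coeff m r c' k g * ((r p - r k) * ?H g))
          + r k * (\<Sum>g<c' k. tail_coeff m r c' k g * (if g = 0 then 0 else ?H (g - 1)))"
    unfolding split by (simp add: sum_distrib_left sum.distrib[symmetric] algebra_simps)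
  also have "\<dots> = (\<Sum>g<c' k. tail_coeff m r c' k g * ((r p - r k) * ?H g))
          + r k * (\<Sum>g<c' k. (if Suc g < c' k then tail_coeff m r c' k (Suc g) else 0) * ?H g)"
    by (simp only: sum_lessThan_index_shift)
  also have "\<dots> = r p * (\<Sum>g<c k. tail_coeff m r c k g * ?H g)"
  proof (cases "k = p")
    case True
    have "(\<Sum>g<c' k. (if Suc g < c' k then tail_coeff m r c' k (Suc g) else 0) * ?H g)
        = (\<Sum>g<Suc (c p). (if g < c p then tail_coeff m r c p g else 0) * ?H g)"
      using True by (intro sum.cong) (auto simp: c'_def tail_coeff_bump_self)
    also have "\<dots> = (\<Sum>g<c p. tail_coeff m r c p g * ?H g)"
      by (simp add: sum.lessThan_Suc)
    finally show ?thesis using True by (simp add: c'_def)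
  next
    case False
    have "(\<Sum>g<c' k. tail_coeff m r c' k g * ((r p - r k) * ?H g))
          + r k * (\<Sum>g<c' k. (if Suc g < c' k then tail_coeff m r c' k (Suc g) else 0) * ?H g)
        = (\<Sum>g<c k. ((r p - r k) * tail_coeff m r c' k g
            + (if Suc g < c k then r k * tail_coeff m r c' k (Suc g) else 0)) * ?H g)"
      using False by (auto simp: c'_def sum_distrib_left sum.distrib[symmetric] algebra_simps
          intro!: sum.cong)
    also have "\<dots> = (\<Sum>g<c k. (r p * tail_coeff m r c k g) * ?H g)"
      by (intro sum.cong refl)
        (simp only: c'_def lessThan_iff tail_coeff_bump_other[OF p False rr[OF False], where c = c])
    finally show ?thesis by (simp add: sum_distrib_left mult.assoc)
  qed
  finally show ?thesis .
qed

lemma erlang_mix_tail_ode: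
  assumes p: "p \<in> {1..m}" and rr: "\<And>k. k \<in> {1..m} \<Longrightarrow> k \<noteq> p \<Longrightarrow> r p \<noteq> r k"
  shows "erlang_mix_tail_deriv m r (c(p := Suc (c p))) x + r p * erlang_mix_tail m r (c(p := Suc (c p))) x
         = r p * erlang_mix_tail m r c x"
proof -
  let ?c' = "c(p := Suc (c p))"
  have "erlang_mix_tail_deriv m r ?c' x + r p * erlang_mix_tail m r ?c' x
      = (\<Sum>k\<in>{1..m}. (\<Sum>g<?c' k. tail_coeff m r ?c' k g * (- r k * poisson_term (r k * x) g))
           + r p * (\<Sum>g<?c' k. tail_coeff m r ?c' k g * H (r k * x) g))"
    unfolding erlang_mix_tail_def erlang_mix_tail_deriv_def by (simp only: sum.distrib sum_distrib_left)
  also have "\<dots> = (\<Sum>k\<in>{1..m}. r p * (\<Sum>g<c k. tail_coeff m r c k g * H (r k * x) g))"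
    using erlang_mix_tail_summand_ode[OF p] rr by (intro sum.cong) auto
  also have "\<dots> = r p * erlang_mix_tail m r c x"
    unfolding erlang_mix_tail_def by (simp only: sum_distrib_left)
  finally show ?thesis .
qed

text \<open>The substitution \<open>y = t + w ln z\<close> turns the differential equation into
  \<open>d/dz (z \<Phi>(c', t + w ln z)) = \<Phi>(c, t + w ln z)\<close>.\<close>
lemma has_integral_erlang_mix_tail_log:
  fixes c :: "nat \<Rightarrow> nat"
  assumes p: "p \<in> {1..m}" and rr: "\<And>k. k \<in> {1..m} \<Longrightarrow> k \<noteq> p \<Longrightarrow> r p \<noteq> r k"
    and w: "w > 0" and rp: "r p = 1 / w" and t: "t \<ge> 0"
  defines "c' \<equiv> c(p := Suc (c p))"
  shows "((\<lambda>z. erlang_mix_tail m r c (t + w * ln z)) has_integral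
           (erlang_mix_tail m r c' t - exp (- (r p * t)) * erlang_mix_tail m r c' 0))
         {exp (- (r p * t))..1}"
proof -
  let ?a = "exp (- (r p * t))"
  have a1: "?a \<le> 1" using t w rp by simp
  have der: "((\<lambda>z. z * erlang_mix_tail m r c' (t + w * ln z)) has_real_derivative
                erlang_mix_tail m r c (t + w * ln z)) (at z)"
    if z: "z > 0" for z
  proof -
    let ?y = "t + w * ln z"
    have "((\<lambda>z. t + w * ln z) has_real_derivative (w * (1 / z))) (at z)"
      using z by (auto intro!: derivative_eq_intros)
    then have "((\<lambda>z. erlang_mix_tail m r c' (t + w * ln z)) has_real_derivative
        (erlang_mix_tail_deriv m r c' ?y * (w * (1 / z)))) (at z)"
      by (rule DERIV_chain2[OF erlang_mix_tail_has_real_derivative])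
    note chain = this
    have "((\<lambda>z. z * erlang_mix_tail m r c' (t + w * ln z)) has_real_derivative
        (1 * erlang_mix_tail m r c' ?y + z * (erlang_mix_tail_deriv m r c' ?y * (w * (1 / z))))) (at z)"
      using DERIV_mult'[OF DERIV_ident chain] by (simp add: algebra_simps)
    also have "1 * erlang_mix_tail m r c' ?y + z * (erlang_mix_tail_deriv m r c' ?y * (w * (1 / z)))
        = w * (erlang_mix_tail_deriv m r c' ?y + r p * erlang_mix_tail m r c' ?y)"
      using z w rp by (simp add: field_simps)
    also have "\<dots> = erlang_mix_tail m r c ?y"
      using erlang_mix_tail_ode[where m = m and r = r and c = c and x = ?y, OF p rr] w rp
      by (simp add: c'_def)
    finally show ?thesis .
  qed
  have "((\<lambda>z. erlang_mix_tail m r c (t + w * ln z)) has_integral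
      (1 * erlang_mix_tail m r c' (t + w * ln 1) - ?a * erlang_mix_tail m r c' (t + w * ln ?a)))
      {?a..1}"
  proof (rule fundamental_theorem_of_calculus[OF a1])
    fix z assume "z \<in> {?a..1}"
    then have "z > 0" by (meson atLeastAtMost_iff exp_gt_zero less_le_trans)
    then show "((\<lambda>z. z * erlang_mix_tail m r c' (t + w * ln z)) has_vector_derivative
        erlang_mix_tail m r c (t + w * ln z)) (at z within {?a..1})"
      by (intro has_vector_derivative_at_within[OF der[unfolded has_real_derivative_iff_has_vector_derivative]])
  qed
  moreover have "t + w * ln ?a = 0" using w rp by simp
  ultimately show ?thesis by (simp only: ln_one mult_zero_right add_0_right mult_1)
qed

lemma erlang_mix_tail_single_group:
  assumes p: "p \<in> {1..m}" and others: "\<And>k. k \<in> {1..m} \<Longrightarrow> k \<noteq> p \<Longrightarrow> c k = 0"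
    and cp: "c p \<ge> 1"
  shows "erlang_mix_tail m r c x = H (r p * x) (c p - 1)"
proof -
  have coeff: "tail_coeff m r c p g = (if g = c p - 1 then 1 else 0)" if "g < c p" for g
  proof -
    have "tail_coeff m r c p g = (if c p - 1 - g = 0 then 1 else 0)"
      unfolding tail_coeff_def
      by (rule composition_sum_delta) (auto simp: others partial_fraction_coeff_0)
    then show ?thesis using that by auto
  qed
  have "erlang_mix_tail m r c x = (\<Sum>g<c p. tail_coeff m r c p g * H (r p * x) g)"
    unfolding erlang_mix_tail_def
    by (subst sum.remove[OF _ p]) (auto simp: others intro!: sum.neutral)
  also have "\<dots> = (\<Sum>g<c p. if g = c p - 1 then H (r p * x) g else 0)"
    by (rule sum.cong) (auto simp: coeff)
  also have "\<dots> = H (r p * x) (c p - 1)" using cp by (subst sum.delta) auto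
  finally show ?thesis .
qed

lemma add_mult_ln_nonneg:
  fixes w x z :: real
  assumes "w > 0" and "exp (- (x / w)) \<le> z"
  shows "x + w * ln z \<ge> 0"
proof -
  have "z > 0" using assms(2) by (meson exp_gt_zero less_le_trans)
  then have "exp (- (x / w)) \<le> exp (ln z)" using assms(2) by simp
  then have "- (x / w) \<le> ln z" by simp
  then show ?thesis using assms(1) by (simp add: field_simps)
qed

context prob_space
begin

lemma emeasure_le_add_neg_ln_indep:
  fixes S Z :: "'a \<Rightarrow> real"
  assumes indep: "indep_var borel Z borel S"
  shows "emeasure M {\<omega>\<in>space M. x \<le> S \<omega> + w * - ln (Z \<omega>)}
       = (\<integral>\<^sup>+z. emeasure M {\<omega>\<in>space M. x + w * ln z \<le> S \<omega>} \<partial>distr M borel Z)"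
proof -
  have [measurable]: "Z \<in> borel_measurable M" "S \<in> borel_measurable M"
    using indep by (auto dest: indep_var_rv1 indep_var_rv2)
  define DZ where "DZ = distr M borel Z"
  define DS where "DS = distr M borel S"
  interpret DS: prob_space DS unfolding DS_def by (rule prob_space_distr) simp
  define B where "B = {p :: real \<times> real. x \<le> snd p + w * - ln (fst p)}"
  have B: "B \<in> sets (borel \<Otimes>\<^sub>M borel)"
  proof -
    have "{p \<in> space (borel \<Otimes>\<^sub>M borel). x \<le> snd p + w * - ln (fst p)} \<in> sets (borel \<Otimes>\<^sub>M borel)"
      by measurable
    then show ?thesis by (simp add: B_def space_pair_measure)
  qed
  have "emeasure M {\<omega>\<in>space M. x \<le> S \<omega> + w * - ln (Z \<omega>)}
      = emeasure (distr M (borel \<Otimes>\<^sub>M borel) (\<lambda>\<omega>. (Z \<omega>, S \<omega>))) B"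
    by (subst emeasure_distr[OF _ B]) (auto simp: B_def intro!: arg_cong[where f = "emeasure M"])
  also have "\<dots> = emeasure (DZ \<Otimes>\<^sub>M DS) B"
    using indep by (simp add: DZ_def DS_def indep_var_distribution_eq)
  also have "\<dots> = (\<integral>\<^sup>+z. emeasure DS (Pair z -` B) \<partial>DZ)"
    using B by (intro DS.emeasure_pair_measure_alt) (simp add: DZ_def DS_def cong: sets_pair_measure_cong)
  also have "\<dots> = (\<integral>\<^sup>+z. emeasure M {\<omega>\<in>space M. x + w * ln z \<le> S \<omega>} \<partial>DZ)"
  proof (rule nn_integral_cong)
    fix z
    have "emeasure DS (Pair z -` B) = emeasure M (S -` (Pair z -` B) \<inter> space M)"
      unfolding DS_def by (rule emeasure_distr) (auto simp: B_def)
    also have "S -` (Pair z -` B) \<inter> space M = {\<omega>\<in>space M. x + w * ln z \<le> S \<omega>}"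
      by (auto simp: B_def)
    finally show "emeasure DS (Pair z -` B) = emeasure M {\<omega>\<in>space M. x + w * ln z \<le> S \<omega>}" .
  qed
  finally show ?thesis by (simp add: DZ_def)
qed

lemma borel_measurable_emeasure_le_add_ln:
  fixes S :: "'a \<Rightarrow> real"
  assumes [measurable]: "S \<in> borel_measurable M"
  shows "(\<lambda>z. emeasure M {\<omega>\<in>space M. x + w * ln z \<le> S \<omega>}) \<in> borel_measurable borel"
proof -
  let ?Q = "{q \<in> space (borel \<Otimes>\<^sub>M M). x + w * ln (fst q) \<le> S (snd q)}"
  have "?Q \<in> sets (borel \<Otimes>\<^sub>M M)" by measurable
  then have "(\<lambda>z. emeasure M (Pair z -` ?Q)) \<in> borel_measurable borel"
    by (rule measurable_emeasure_Pair)
  moreover have "Pair z -` ?Q = {\<omega>\<in>space M. x + w * ln z \<le> S \<omega>}" for z :: real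
    by (auto simp: space_pair_measure)
  ultimately show ?thesis by simp
qed

text \<open>For \<open>z \<le> e^(-x/w)\<close> the event is certain since \<open>S \<ge> 0\<close>; this produces the exponential term.\<close>
lemma emeasure_le_add_neg_ln_uniform:
  fixes S Z :: "'a \<Rightarrow> real"
  assumes indep: "indep_var borel Z borel S"
    and uniform: "distr M borel Z = uniform_measure lborel {0<..1}"
    and nonneg: "AE \<omega> in M. S \<omega> \<ge> 0" and w: "w > 0" and x: "x \<ge> 0"
  shows "emeasure M {\<omega>\<in>space M. x \<le> S \<omega> + w * - ln (Z \<omega>)} =
     ennreal (exp (- (x / w))) + (\<integral>\<^sup>+z. ennreal (prob {\<omega>\<in>space M. x + w * ln z \<le> S \<omega>})
        * indicator {exp (- (x / w))<..1} z \<partial>lborel)"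
proof -
  have [measurable]: "S \<in> borel_measurable M"
    using indep by (auto dest: indep_var_rv2)
  define a where "a = exp (- (x / w))"
  have a: "0 < a" "a \<le> 1" using x w by (auto simp: a_def)
  have certain: "prob {\<omega>\<in>space M. y \<le> S \<omega>} = 1" if "y \<le> 0" for y
    using nonneg that by (subst prob_Collect_eq_1) (auto elim!: eventually_mono)
  have split: "prob {\<omega>\<in>space M. x + w * ln z \<le> S \<omega>} * indicator {0<..1} z
      = indicator {0<..a} z + prob {\<omega>\<in>space M. x + w * ln z \<le> S \<omega>} * indicator {a<..1} z" for z
  proof (cases "0 < z \<and> z \<le> a")
    case True
    then have "ln z \<le> ln a" by simp
    then have "ln z \<le> - (x / w)" by (simp add: a_def)
    then have "x + w * ln z \<le> 0" using w by (simp add: field_simps)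
    then show ?thesis using True a by (simp add: certain indicator_def)
  qed (use a in \<open>auto simp: indicator_def\<close>)
  have "emeasure M {\<omega>\<in>space M. x \<le> S \<omega> + w * - ln (Z \<omega>)}
      = (\<integral>\<^sup>+z. ennreal (prob {\<omega>\<in>space M. x + w * ln z \<le> S \<omega>} * indicator {0<..1} z) \<partial>lborel)"
    unfolding emeasure_le_add_neg_ln_indep[OF indep] uniform
    using borel_measurable_emeasure_le_add_ln[of S x w]
    by (subst nn_integral_uniform_measure)
       (auto simp: emeasure_eq_measure ennreal_mult' ennreal_indicator divide_ennreal_def
         cong: measurable_cong_sets)
  also have "\<dots> = (\<integral>\<^sup>+z. indicator {0<..a} z \<partial>lborel)
      + (\<integral>\<^sup>+z. ennreal (prob {\<omega>\<in>space M. x + w * ln z \<le> S \<omega>}) * indicator {a<..1} z \<partial>lborel)"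
    unfolding split
    using borel_measurable_emeasure_le_add_ln[of S x w]
    by (subst nn_integral_add[symmetric])
       (auto simp: emeasure_eq_measure ennreal_mult' intro!: nn_integral_cong split: split_indicator)
  finally show ?thesis using a by (simp add: a_def)
qed

end

locale weighted_uniform_pvalues = prob_space M for M :: "'a measure" +
  fixes m :: nat and n :: "nat \<Rightarrow> nat" and w :: "nat \<Rightarrow> real"
    and X :: "nat \<times> nat \<Rightarrow> 'a \<Rightarrow> real"
  assumes weights_pos: "\<forall>k\<in>{1..m}. w k > 0" and weights_inj: "inj_on w {1..m}"
    and indep: "indep_vars (\<lambda>_. borel) X {(k, j). k \<in> {1..m} \<and> j \<in> {1..n k}}"
    and uniform: "\<forall>k\<in>{1..m}. \<forall>j\<in>{1..n k}. distr M borel (X (k, j)) = uniform_measure lborel {0<..1}"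
begin

definition r :: "nat \<Rightarrow> real" where
  "r k = 1 / w k"

definition cells :: "(nat \<Rightarrow> nat) \<Rightarrow> (nat \<times> nat) set" where
  "cells c = {(k, j). k \<in> {1..m} \<and> j \<in> {1..c k}}"

definition stat :: "(nat \<Rightarrow> nat) \<Rightarrow> 'a \<Rightarrow> real" where
  "stat c \<omega> = (\<Sum>i\<in>cells c. w (fst i) * - ln (X i \<omega>))"

definition tail :: "(nat \<Rightarrow> nat) \<Rightarrow> real \<Rightarrow> real" where
  "tail c y = prob {\<omega>\<in>space M. y \<le> stat c \<omega>}"

definition below_n :: "(nat \<Rightarrow> nat) \<Rightarrow> bool" where
  "below_n c \<longleftrightarrow> (\<forall>k\<in>{1..m}. c k \<le> n k)"

lemma r_inj:
  assumes "p \<in> {1..m}" "k \<in> {1..m}" "k \<noteq> p"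
  shows "r p \<noteq> r k"
proof
  assume "r p = r k"
  then have "w p = w k" using weights_pos assms by (auto simp: r_def)
  then show False using weights_inj assms by (auto dest: inj_onD)
qed

lemma finite_cells: "finite (cells c)"
proof -
  have "cells c = Sigma {1..m} (\<lambda>k. {1..c k})" by (auto simp: cells_def)
  then show ?thesis by (simp only:) (intro finite_SigmaI; simp)
qed

lemma cells_subset: "below_n c \<Longrightarrow> cells c \<subseteq> cells n"
  by (auto simp: cells_def below_n_def intro: order_trans)

lemma indep_cells: "indep_vars (\<lambda>_. borel) X (cells n)"
  using indep by (simp add: cells_def)

lemma X_measurable: "i \<in> cells n \<Longrightarrow> X i \<in> borel_measurable M"
  using indep_cells unfolding indep_vars_def by auto

lemma AE_X_in_unit_interval: "AE \<omega> in M. \<forall>i\<in>cells n. X i \<omega> \<in> {0<..1}"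
proof (rule AE_finite_allI[OF finite_cells])
  fix i assume i: "i \<in> cells n"
  have "distr M borel (X i) = uniform_measure lborel {0<..1}"
    using uniform i by (auto simp: cells_def)
  then have "AE z in distr M borel (X i). z \<in> {0<..1}"
    by (simp only:) (rule AE_uniform_measureI, auto simp: greaterThanAtMost_borel)
  then show "AE \<omega> in M. X i \<omega> \<in> {0<..1}"
    by (rule AE_distrD[OF X_measurable[OF i]])
qed

lemma stat_measurable: "below_n c \<Longrightarrow> stat c \<in> borel_measurable M"
  unfolding stat_def[abs_def] using cells_subset X_measurable
  by (intro borel_measurable_sum borel_measurable_times borel_measurable_const
      borel_measurable_uminus borel_measurable_ln) auto

lemma AE_stat_nonneg:
  assumes "below_n c"
  shows "AE \<omega> in M. stat c \<omega> \<ge> 0"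
  using AE_X_in_unit_interval
proof (rule eventually_mono)
  fix \<omega> assume X: "\<forall>i\<in>cells n. X i \<omega> \<in> {0<..1}"
  show "stat c \<omega> \<ge> 0" unfolding stat_def
  proof (rule sum_nonneg)
    fix i assume i: "i \<in> cells c"
    then have "0 < X i \<omega>" "X i \<omega> \<le> 1" using X cells_subset[OF assms] by auto
    then have "ln (X i \<omega>) \<le> 0" by simp
    moreover have "w (fst i) > 0" using i weights_pos by (auto simp: cells_def)
    ultimately show "0 \<le> w (fst i) * - ln (X i \<omega>)" by (simp add: mult_nonneg_nonpos)
  qed
qed

lemma cells_bump:
  assumes "p \<in> {1..m}"
  shows "cells (c(p := Suc (c p))) = insert (p, Suc (c p)) (cells c)" and "(p, Suc (c p)) \<notin> cells c"
  using assms by (auto simp: cells_def split: if_splits)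

lemma stat_bump:
  assumes "p \<in> {1..m}"
  shows "stat (c(p := Suc (c p))) \<omega> = stat c \<omega> + w p * - ln (X (p, Suc (c p)) \<omega>)"
  unfolding stat_def cells_bump[OF assms] using finite_cells cells_bump(2)[OF assms] by simp

lemma indep_var_bump:
  assumes p: "p \<in> {1..m}" and below: "below_n (c(p := Suc (c p)))"
  shows "indep_var borel (X (p, Suc (c p))) borel (stat c)"
proof -
  let ?i = "(p, Suc (c p))"
  have indep': "indep_vars (\<lambda>_. borel) X (insert ?i (cells c))"
    using indep_vars_subset[OF indep_cells cells_subset[OF below]] by (simp add: cells_bump[OF p])
  have "indep_var borel ((\<lambda>f. f ?i) \<circ> (\<lambda>\<omega>. restrict (\<lambda>i. X i \<omega>) {?i}))
      borel ((\<lambda>f. \<Sum>i\<in>cells c. w (fst i) * - ln (f i)) \<circ> (\<lambda>\<omega>. restrict (\<lambda>i. X i \<omega>) (cells c)))"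
    using cells_bump(2)[OF p] by (intro indep_var_compose[OF indep_var_restrict[OF indep']]) auto
  also have "(\<lambda>f. f ?i) \<circ> (\<lambda>\<omega>. restrict (\<lambda>i. X i \<omega>) {?i}) = X ?i"
    by auto
  also have "(\<lambda>f. \<Sum>i\<in>cells c. w (fst i) * - ln (f i)) \<circ> (\<lambda>\<omega>. restrict (\<lambda>i. X i \<omega>) (cells c))
      = stat c"
    by (auto simp: stat_def fun_eq_iff intro!: sum.cong)
  finally show ?thesis .
qed

lemma emeasure_stat_bump:
  assumes p: "p \<in> {1..m}" and below: "below_n (c(p := Suc (c p)))" and x: "x \<ge> 0"
  shows "emeasure M {\<omega>\<in>space M. x \<le> stat (c(p := Suc (c p))) \<omega>} =
     ennreal (exp (- (r p * x)))
       + (\<integral>\<^sup>+z. ennreal (tail c (x + w p * ln z)) * indicator {exp (- (r p * x))<..1} z \<partial>lborel)"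
proof -
  have "below_n c" using below unfolding below_n_def by (metis fun_upd_apply Suc_leD)
  have "Suc (c p) \<le> n p" using below p unfolding below_n_def by (metis fun_upd_same)
  then have "distr M borel (X (p, Suc (c p))) = uniform_measure lborel {0<..1}"
    using uniform p by auto
  from emeasure_le_add_neg_ln_uniform[OF indep_var_bump[OF p below] this
      AE_stat_nonneg[OF \<open>below_n c\<close>], of "w p" x]
  show ?thesis using weights_pos p x by (simp add: stat_bump[OF p] tail_def r_def)
qed

lemma tail_bump:
  assumes p: "p \<in> {1..m}" and below: "below_n (c(p := Suc (c p)))"
    and IH: "\<And>y. y \<ge> 0 \<Longrightarrow> tail c y = erlang_mix_tail m r c y" and x: "x \<ge> 0"
  shows "tail (c(p := Suc (c p))) x = erlang_mix_tail m r (c(p := Suc (c p))) x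
           + (1 - erlang_mix_tail m r (c(p := Suc (c p))) 0) * exp (- (r p * x))"
proof -
  let ?c' = "c(p := Suc (c p))"
  define a where "a = exp (- (r p * x))"
  define I where "I = erlang_mix_tail m r ?c' x - a * erlang_mix_tail m r ?c' 0"
  have wp: "w p > 0" using weights_pos p by auto
  have a: "a > 0" "a = exp (- (x / w p))" by (simp_all add: a_def r_def)
  have int: "((\<lambda>z. erlang_mix_tail m r c (x + w p * ln z)) has_integral I) {a..1}"
    unfolding I_def a_def
    by (rule has_integral_erlang_mix_tail_log[where m = m and r = r and c = c,
          OF p r_inj[OF p] wp r_def[of p] x])
  have IH': "tail c (x + w p * ln z) = erlang_mix_tail m r c (x + w p * ln z)" if "z \<in> {a..1}" for z
    using that a wp by (intro IH add_mult_ln_nonneg) auto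
  have nonneg: "0 \<le> erlang_mix_tail m r c (x + w p * ln z)" if "z \<in> {a..1}" for z
    using IH'[OF that] measure_nonneg by (metis tail_def)
  then have "I \<ge> 0" using has_integral_nonneg[OF int] by simp
  have "(\<integral>\<^sup>+z. ennreal (tail c (x + w p * ln z)) * indicator {a<..1} z \<partial>lborel)
      = (\<integral>\<^sup>+z. ennreal (erlang_mix_tail m r c (x + w p * ln z)) * indicator {a..1} z \<partial>lborel)"
    using AE_lborel_singleton[of a]
    by (intro nn_integral_cong_AE) (auto elim!: eventually_mono simp: IH' split: split_indicator)
  also have "\<dots> = ennreal I"
    by (rule nn_integral_has_integral_lebesgue'[OF nonneg int])
  finally have "emeasure M {\<omega>\<in>space M. x \<le> stat ?c' \<omega>} = ennreal (a + I)"
    using emeasure_stat_bump[OF p below x] a \<open>I \<ge> 0\<close> by (simp add: a_def)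
  then have "ennreal (tail ?c' x) = ennreal (a + I)"
    by (simp add: tail_def emeasure_eq_measure del: ennreal_plus)
  then have "tail ?c' x = a + I"
    using a \<open>I \<ge> 0\<close> by (subst (asm) ennreal_inj) (auto simp: tail_def)
  then show ?thesis by (simp add: I_def a_def algebra_simps)
qed

lemma tail_bump_from_empty:
  assumes p: "p \<in> {1..m}" and below: "below_n (c(p := Suc (c p)))"
    and empty: "\<And>k. k \<in> {1..m} \<Longrightarrow> c k = 0" and x: "x \<ge> 0"
  shows "tail (c(p := Suc (c p))) x = exp (- (r p * x))"
proof -
  define a where "a = exp (- (r p * x))"
  have wp: "w p > 0" using weights_pos p by auto
  have "cells c = {}" using empty by (auto simp: cells_def)
  then have tail_c: "tail c y = 0" if "y > 0" for y
    using that by (simp add: tail_def stat_def)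
  have zero: "ennreal (tail c (x + w p * ln z)) * indicator {a<..1} z = 0" for z
  proof (cases "z \<in> {a<..1}")
    case True
    moreover have "a > 0" by (simp add: a_def)
    ultimately have "z > 0" by simp
    then have "exp (- (x / w p)) < exp (ln z)" using True by (simp add: a_def r_def)
    then have "ln z > - (x / w p)" by simp
    then have "x + w p * ln z > 0" using wp by (simp add: field_simps)
    then show ?thesis by (simp add: tail_c)
  qed simp
  then have "emeasure M {\<omega>\<in>space M. x \<le> stat (c(p := Suc (c p))) \<omega>} = ennreal a"
    using emeasure_stat_bump[OF p below x, folded a_def] by (simp only: zero nn_integral_const mult_zero_left add_0_right)
  then show ?thesis by (simp add: tail_def emeasure_eq_measure a_def)
qed

lemma below_n_pred: "below_n c \<Longrightarrow> below_n (c(p := c p - 1))"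
  by (auto simp: below_n_def intro: le_trans[OF diff_le_self])

lemma tail_eq_of_pred:
  assumes p: "p \<in> {1..m}" "c p > 0" and below: "below_n c"
    and IH: "\<And>y. y \<ge> 0 \<Longrightarrow> tail (c(p := c p - 1)) y = erlang_mix_tail m r (c(p := c p - 1)) y"
    and y: "y \<ge> 0"
  shows "tail c y = erlang_mix_tail m r c y + (1 - erlang_mix_tail m r c 0) * exp (- (r p * y))"
proof -
  have bump: "(c(p := c p - 1))(p := Suc ((c(p := c p - 1)) p)) = c" using p by (auto simp: fun_eq_iff)
  from tail_bump[of p "c(p := c p - 1)", unfolded bump, OF p(1) below IH y] show ?thesis .
qed

lemma tail_eq_erlang_mix_tail:
  "below_n c \<Longrightarrow> \<exists>k\<in>{1..m}. c k > 0 \<Longrightarrow> x \<ge> 0 \<Longrightarrow> tail c x = erlang_mix_tail m r c x"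
proof (induction "\<Sum>k\<in>{1..m}. c k" arbitrary: c x rule: less_induct)
  case (less c x)
  have step: "tail c y = erlang_mix_tail m r c y + (1 - erlang_mix_tail m r c 0) * exp (- (r p * y))"
    if p: "p \<in> {1..m}" "c p > 0" and active: "\<exists>k\<in>{1..m}. (c(p := c p - 1)) k > 0" and y: "y \<ge> 0"
    for p y
  proof (rule tail_eq_of_pred[OF p less.prems(1) _ y])
    have "(\<Sum>k\<in>{1..m}. (c(p := c p - 1)) k) < (\<Sum>k\<in>{1..m}. c k)"
      using p by (intro sum_strict_mono_ex1) auto
    then show "tail (c(p := c p - 1)) y' = erlang_mix_tail m r (c(p := c p - 1)) y'" if "y' \<ge> 0" for y'
      using less.hyps below_n_pred[OF less.prems(1)] active that by blast
  qed
  obtain p where p: "p \<in> {1..m}" "c p > 0" using less.prems(2) by auto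
  show ?case
  proof (cases "\<exists>q\<in>{1..m}. q \<noteq> p \<and> c q > 0")
    case True
    then obtain q where q: "q \<in> {1..m}" "q \<noteq> p" "c q > 0" by auto
    have "(1 - erlang_mix_tail m r c 0) * exp (- r p) = (1 - erlang_mix_tail m r c 0) * exp (- r q)"
      using step[OF p _, of 1] step[OF q(1,3) _, of 1] p q by force
    moreover have "exp (- r p) \<noteq> exp (- r q)" using r_inj[OF p(1) q(1,2)] by simp
    ultimately have "erlang_mix_tail m r c 0 = 1" by simp
    then show ?thesis using step[OF p _ less.prems(3)] q by force
  next
    case False
    then have single: "\<And>k. k \<in> {1..m} \<Longrightarrow> k \<noteq> p \<Longrightarrow> c k = 0" by auto
    have tail_single: "erlang_mix_tail m r c y = H (r p * y) (c p - 1)" for y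
      using erlang_mix_tail_single_group[OF p(1) single] p(2) by simp
    show ?thesis
    proof (cases "c p = 1")
      case True
      let ?c0 = "c(p := 0)"
      have bump: "?c0(p := Suc (?c0 p)) = c" using True by (auto simp: fun_eq_iff)
      have "\<And>k. k \<in> {1..m} \<Longrightarrow> ?c0 k = 0" using single by auto
      from tail_bump_from_empty[of p ?c0 x, unfolded bump, OF p(1) less.prems(1) this less.prems(3)]
      have "tail c x = exp (- (r p * x))" .
      then show ?thesis using True by (simp add: tail_single H_0)
    next
      case False
      then have active: "\<exists>k\<in>{1..m}. (c(p := c p - 1)) k > 0" using p by (intro bexI[of _ p]) auto
      show ?thesis using step[OF p active less.prems(3)] tail_single[of 0] by (simp add: H_at_zero)
    qed
  qed
qed

end

lemma ln_Qstat:
  assumes pos: "\<And>k j. k \<in> {1..m} \<Longrightarrow> j \<in> {1..n k} \<Longrightarrow> x (k, j) > 0"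
  shows "Qstat m n w x > 0"
    and "ln (Qstat m n w x) = (\<Sum>k\<in>{1..m}. w k * (\<Sum>j\<in>{1..n k}. ln (x (k, j))))"
proof -
  have group_pos: "(\<Prod>j\<in>{1..n k}. x (k, j)) > 0" if "k \<in> {1..m}" for k
    using pos that by (intro prod_pos) auto
  then show "Qstat m n w x > 0"
    unfolding Qstat_def by (intro prod_pos) (metis powr_gt_zero less_irrefl atLeastAtMost_iff)
  have "ln (Qstat m n w x) = (\<Sum>k\<in>{1..m}. ln ((\<Prod>j\<in>{1..n k}. x (k, j)) powr w k))"
    unfolding Qstat_def using group_pos by (intro ln_prod) (simp_all add: less_imp_neq[symmetric])
  also have "\<dots> = (\<Sum>k\<in>{1..m}. w k * (\<Sum>j\<in>{1..n k}. ln (x (k, j))))"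
  proof (rule sum.cong[OF refl])
    fix k assume k: "k \<in> {1..m}"
    have "ln (\<Prod>j\<in>{1..n k}. x (k, j)) = (\<Sum>j\<in>{1..n k}. ln (x (k, j)))"
      using pos k by (intro ln_prod) (auto simp: less_imp_neq[symmetric])
    then show "ln ((\<Prod>j\<in>{1..n k}. x (k, j)) powr w k) = w k * (\<Sum>j\<in>{1..n k}. ln (x (k, j)))"
      using group_pos[OF k] by (simp add: ln_powr)
  qed
  finally show "ln (Qstat m n w x) = (\<Sum>k\<in>{1..m}. w k * (\<Sum>j\<in>{1..n k}. ln (x (k, j))))" .
qed

lemma tail_coeff_explicit:
  assumes n: "\<forall>j\<in>{1..m}. n j \<ge> 1" and k: "k \<in> {1..m}" and gk: "gk \<le> n k - 1"
  shows "tail_coeff m r n k gk =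
    (\<Sum>g\<in>{g :: nat \<Rightarrow> nat. g k = gk \<and> (\<forall>i. i \<notin> {1..m} \<longrightarrow> g i = 0)
                 \<and> (\<Sum>i\<in>{1..m}. g i) = n k - 1}.
       \<Prod>j\<in>{1..m} - {k}.
         fact (n j - 1 + g j) / (fact (n j - 1) * fact (g j))
         * ((- r k) ^ g j * r j ^ n j / (r j - r k) ^ (n j + g j)))"
proof -
  have "{g. g k = gk \<and> (\<forall>i. i \<notin> {1..m} \<longrightarrow> g i = 0) \<and> (\<Sum>i\<in>{1..m}. g i) = n k - 1}
      = {g \<in> compositions {1..m} (n k - 1). g k = gk}"
    by (auto simp: compositions_def)
  moreover have "(\<Prod>j\<in>{1..m} - {k}. fact (n j - 1 + g j) / (fact (n j - 1) * fact (g j))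
              * ((- r k) ^ g j * r j ^ n j / (r j - r k) ^ (n j + g j)))
      = (\<Prod>j\<in>{1..m} - {k}. partial_fraction_coeff (r k) (r j) (n j) (g j))" for g :: "nat \<Rightarrow> nat"
    using n by (intro prod.cong refl partial_fraction_coeff_fact[symmetric]) auto
  ultimately show ?thesis
    unfolding tail_coeff_def
    using composition_sum_fixed_coordinate[OF _ k gk, where f = "\<lambda>j. partial_fraction_coeff (r k) (r j) (n j)"]
    by simp
qed

lemma erlang_mix_tail_explicit:
  assumes n: "\<forall>k\<in>{1..m}. n k \<ge> 1"
  shows "erlang_mix_tail m r n t = (\<Sum>k\<in>{1..m}. \<Sum>gk\<in>{0..n k - 1}.
        \<Sum>g\<in>{g :: nat \<Rightarrow> nat. g k = gk \<and> (\<forall>i. i \<notin> {1..m} \<longrightarrow> g i = 0)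
                 \<and> (\<Sum>i\<in>{1..m}. g i) = n k - 1}.
          (\<Prod>j\<in>{1..m} - {k}.
              fact (n j - 1 + g j) / (fact (n j - 1) * fact (g j))
              * ((- r k) ^ g j * r j ^ n j / (r j - r k) ^ (n j + g j)))
          * H (r k * t) gk)"
proof -
  have "{..<n k} = {0..n k - 1}" if "k \<in> {1..m}" for k
  proof -
    have "n k \<ge> 1" using n that by auto
    then show ?thesis by auto
  qed
  then show ?thesis
    unfolding erlang_mix_tail_def
    by (intro sum.cong) (simp_all add: tail_coeff_explicit[OF n] sum_distrib_right)
qed

context weighted_uniform_pvalues
begin

lemma prob_Qstat_le:
  assumes n: "\<forall>k\<in>{1..m}. n k \<ge> 1" and m: "m \<ge> 1" and \<tau>: "0 < \<tau>" "\<tau> \<le> 1"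
  shows "measure M {\<omega> \<in> space M. Qstat m n w (\<lambda>i. X i \<omega>) \<le> \<tau>} = erlang_mix_tail m r n (- ln \<tau>)"
proof -
  have Q_measurable: "(\<lambda>\<omega>. Qstat m n w (\<lambda>i. X i \<omega>)) \<in> borel_measurable M"
    unfolding Qstat_def
  proof (rule borel_measurable_prod)
    fix k assume k: "k \<in> {1..m}"
    have "(\<lambda>\<omega>. \<Prod>j\<in>{1..n k}. X (k, j) \<omega>) \<in> borel_measurable M"
      using k by (intro borel_measurable_prod X_measurable) (auto simp: cells_def)
    then show "(\<lambda>\<omega>. (\<Prod>j\<in>{1..n k}. X (k, j) \<omega>) powr w k) \<in> borel_measurable M"
      by (rule powr_real_measurable) simp
  qed
  have "AE \<omega> in M. Qstat m n w (\<lambda>i. X i \<omega>) \<le> \<tau> \<longleftrightarrow> - ln \<tau> \<le> stat n \<omega>"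
    using AE_X_in_unit_interval
  proof (rule eventually_mono)
    fix \<omega> assume "\<forall>i\<in>cells n. X i \<omega> \<in> {0<..1}"
    then have pos: "X (k, j) \<omega> > 0" if "k \<in> {1..m}" "j \<in> {1..n k}" for k j
      using that by (auto simp: cells_def)
    have "stat n \<omega> = (\<Sum>k\<in>{1..m}. \<Sum>j\<in>{1..n k}. w k * - ln (X (k, j) \<omega>))"
    proof -
      have "cells n = Sigma {1..m} (\<lambda>k. {1..n k})" by (auto simp: cells_def)
      then show ?thesis unfolding stat_def by (subst sum.Sigma) (auto intro!: sum.cong simp: split_beta)
    qed
    also have "\<dots> = - (\<Sum>k\<in>{1..m}. w k * (\<Sum>j\<in>{1..n k}. ln (X (k, j) \<omega>)))"
      by (simp add: sum_distrib_left sum_negf)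
    also have "\<dots> = - ln (Qstat m n w (\<lambda>i. X i \<omega>))"
      using ln_Qstat(2)[where x = "\<lambda>i. X i \<omega>", OF pos] by simp
    finally have "stat n \<omega> = - ln (Qstat m n w (\<lambda>i. X i \<omega>))" .
    moreover have "ln (Qstat m n w (\<lambda>i. X i \<omega>)) \<le> ln \<tau> \<longleftrightarrow> Qstat m n w (\<lambda>i. X i \<omega>) \<le> \<tau>"
      by (rule ln_le_cancel_iff[OF ln_Qstat(1)[where x = "\<lambda>i. X i \<omega>", OF pos] \<tau>(1)])
    ultimately show "Qstat m n w (\<lambda>i. X i \<omega>) \<le> \<tau> \<longleftrightarrow> - ln \<tau> \<le> stat n \<omega>"
      by linarith
  qed
  moreover have "{\<omega> \<in> space M. Qstat m n w (\<lambda>i. X i \<omega>) \<le> \<tau>} \<in> sets M"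
    using Q_measurable by measurable
  moreover have "{\<omega> \<in> space M. - ln \<tau> \<le> stat n \<omega>} \<in> sets M"
    using stat_measurable[of n] unfolding below_n_def by measurable
  ultimately have "measure M {\<omega> \<in> space M. Qstat m n w (\<lambda>i. X i \<omega>) \<le> \<tau>} = tail n (- ln \<tau>)"
    unfolding tail_def by (intro measure_eq_AE) auto
  also have "\<dots> = erlang_mix_tail m r n (- ln \<tau>)"
  proof (rule tail_eq_erlang_mix_tail)
    show "\<exists>k\<in>{1..m}. n k > 0" using n m by force
  qed (use \<tau> in \<open>auto simp: below_n_def\<close>)
  finally show ?thesis .
qed

end

theorem mainTheorem1:
  fixes M :: "'a measure"
    and m :: nat and n :: "nat \<Rightarrow> nat" and w :: "nat \<Rightarrow> real"
    and X :: "nat \<times> nat \<Rightarrow> 'a \<Rightarrow> real" and \<tau> :: real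
  assumes "prob_space M"
    and "m \<ge> 1"
    and "\<forall>k\<in>{1..m}. n k \<ge> 1"
    and "\<forall>k\<in>{1..m}. w k > 0"
    and "inj_on w {1..m}"
    and "prob_space.indep_vars M (\<lambda>_. borel) X {(k, j). k \<in> {1..m} \<and> j \<in> {1..n k}}"
    and "\<forall>k\<in>{1..m}. \<forall>j\<in>{1..n k}. distr M borel (X (k, j)) = uniform_measure lborel {0<..1}"
    and "0 < \<tau>" and "\<tau> \<le> 1"
  shows "measure M {\<omega> \<in> space M. Qstat m n w (\<lambda>i. X i \<omega>) \<le> \<tau>} =
    (let r = (\<lambda>k. 1 / w k); t = - ln \<tau> in
     (\<Sum>k\<in>{1..m}. \<Sum>gk\<in>{0..n k - 1}.
        \<Sum>g\<in>{g :: nat \<Rightarrow> nat. g k = gk \<and> (\<forall>i. i \<notin> {1..m} \<longrightarrow> g i = 0)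
                 \<and> (\<Sum>i\<in>{1..m}. g i) = n k - 1}.
          (\<Prod>j\<in>{1..m} - {k}.
              fact (n j - 1 + g j) / (fact (n j - 1) * fact (g j))
              * ((- r k) ^ g j * r j ^ n j / (r j - r k) ^ (n j + g j)))
          * H (r k * t) gk))"
proof -
  have "weighted_uniform_pvalues M m n w X"
    unfolding weighted_uniform_pvalues_def weighted_uniform_pvalues_axioms_def using assms(1,4-7) by blast
  then interpret weighted_uniform_pvalues M m n w X .
  have "r = (\<lambda>k. 1 / w k)" by (simp add: fun_eq_iff r_def)
  then show ?thesis
    using prob_Qstat_le[OF assms(3,2,8,9)] erlang_mix_tail_explicit[OF assms(3)] by (simp add: Let_def)
qed

end
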